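(* Let $(G_1,\prec_1)$ and $(G_2,\prec_2)$ be POP-graphs such that the number of output edges of $G_1$ equals the number of input edges of $G_2$. Then $\prec_2\circ\prec_1$ is a planar order on $G_2\circ G_1$.
   Context: A progressive graph is a finite directed acyclic graph (parallel edges allowed) in which every source and every sink has degree one; degree-one vertices are boundary vertices. An input edge is an edge whose initial vertex is a boundary vertex; an output edge one whose terminal vertex is a boundary vertex. For edges write $e\to e'$ if $e\neq e'$ and there is a directed path whose first edge is $e$ and last edge is $e'$. A planar order on $G$ is a linear order $\prec$ on $E(G)$ such that (P1) $e_1\to e_2$ implies $e_1\prec e_2$; (P2) if $e_1\prec e_2\prec e_3$ and $e_1\to e_3$ then $e_1\to e_2$ or $e_2\to e_3$. A POP-graph is a progressive graph with a planar order. Composition: let $(G_1,\prec_1)$, $(G_2,\prec_2)$ be POP-graphs, $G_1$ with output edges $o_1\prec_1\cdots\prec_1 o_n$ and $G_2$ with input edges $i_1\prec_2\cdots\prec_2 i_n$. The progressive graph $G_2\circ G_1$ is obtained from $G_1\sqcup G_2$ by deleting the sinks of $G_1$, the sources of $G_2$ and the edges $o_k,i_k$, and adding for each $k$ a new edge $\overline{e_k}$ from the initial vertex of $o_k$ to the terminal vertex of $i_k$. Let $Q_1=\{e\in E(G_1): e\prec_1 o_1\}$, $Q_k=\{e: o_{k-1}\prec_1 e\prec_1 o_k\}$ ($2\le k\le n$), $P_k=\{e\in E(G_2): i_k\prec_2 e\prec_2 i_{k+1}\}$ ($1\le k\le n-1$), $P_n=\{e: i_n\prec_2 e\}$. The composition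 $\prec_2\circ\prec_1$ is the linear order on $E(G_2\circ G_1)$ listing $Q_1,\{\overline{e_1}\},P_1,Q_2,\{\overline{e_2}\},P_2,\dots,Q_n,\{\overline{e_n}\},P_n$ consecutively, each $Q_k$ ordered by $\prec_1$ and each $P_k$ by $\prec_2$. *)

theory Defs
  imports "Graph_Theory.Digraph"
begin

definition degree :: "('v,'e) pre_digraph \<Rightarrow> 'v \<Rightarrow> nat" where
  "degree G v = in_degree G v + out_degree G v"

definition is_source :: "('v,'e) pre_digraph \<Rightarrow> 'v \<Rightarrow> bool" where
  "is_source G v \<longleftrightarrow> v \<in> verts G \<and> in_degree G v = 0"

definition is_sink :: "('v,'e) pre_digraph \<Rightarrow> 'v \<Rightarrow> bool" where
  "is_sink G v \<longleftrightarrow> v \<in> verts G \<and> out_degree G v = 0"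

definition boundary :: "('v,'e) pre_digraph \<Rightarrow> 'v \<Rightarrow> bool" where
  "boundary G v \<longleftrightarrow> v \<in> verts G \<and> degree G v = 1"

definition progressive :: "('v,'e) pre_digraph \<Rightarrow> bool" where
  "progressive G \<longleftrightarrow> fin_digraph G \<and> acyclic (arcs_ends G)
     \<and> (\<forall>v. is_source G v \<longrightarrow> degree G v = 1)
     \<and> (\<forall>v. is_sink G v \<longrightarrow> degree G v = 1)"

definition input_edges :: "('v,'e) pre_digraph \<Rightarrow> 'e set" where
  "input_edges G = {e \<in> arcs G. boundary G (tail G e)}"

definition output_edges :: "('v,'e) pre_digraph \<Rightarrow> 'e set" where
  "output_edges G = {e \<in> arcs G. boundary G (head G e)}"

definition edge_succ :: "('v,'e) pre_digraph \<Rightarrow> ('e \<times> 'e) set" where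
  "edge_succ G = {(e, e'). e \<in> arcs G \<and> e' \<in> arcs G \<and> head G e = tail G e'}"

definition edge_path :: "('v,'e) pre_digraph \<Rightarrow> 'e \<Rightarrow> 'e \<Rightarrow> bool" where
  "edge_path G e e' \<longleftrightarrow> e \<noteq> e' \<and> (e, e') \<in> (edge_succ G)\<^sup>+"

text \<open>A strict linear order on the edge set (only its restriction to the edges matters).\<close>
definition linear_order_on_edges :: "'e set \<Rightarrow> ('e \<Rightarrow> 'e \<Rightarrow> bool) \<Rightarrow> bool" where
  "linear_order_on_edges E lt \<longleftrightarrow>
     (\<forall>a\<in>E. \<not> lt a a)
   \<and> (\<forall>a\<in>E. \<forall>b\<in>E. \<forall>c\<in>E. lt a b \<longrightarrow> lt b c \<longrightarrow> lt a c)
   \<and> (\<forall>a\<in>E. \<forall>b\<in>E. a \<noteq> b \<longrightarrow> lt a b \<or> lt b a)"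

definition planar_order :: "('v,'e) pre_digraph \<Rightarrow> ('e \<Rightarrow> 'e \<Rightarrow> bool) \<Rightarrow> bool" where
  "planar_order G lt \<longleftrightarrow>
     linear_order_on_edges (arcs G) lt
   \<and> (\<forall>e1\<in>arcs G. \<forall>e2\<in>arcs G. edge_path G e1 e2 \<longrightarrow> lt e1 e2)
   \<and> (\<forall>e1\<in>arcs G. \<forall>e2\<in>arcs G. \<forall>e3\<in>arcs G.
        lt e1 e2 \<longrightarrow> lt e2 e3 \<longrightarrow> edge_path G e1 e3 \<longrightarrow>
        edge_path G e1 e2 \<or> edge_path G e2 e3)"

definition POP_graph :: "('v,'e) pre_digraph \<Rightarrow> ('e \<Rightarrow> 'e \<Rightarrow> bool) \<Rightarrow> bool" where
  "POP_graph G lt \<longleftrightarrow> progressive G \<and> planar_order G lt"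

definition rank_in :: "('e \<Rightarrow> 'e \<Rightarrow> bool) \<Rightarrow> 'e set \<Rightarrow> 'e \<Rightarrow> nat" where
  "rank_in lt S x = card {y \<in> S. lt y x}"

text \<open>The (k+1)-th element of S in the order \<open>lt\<close> (k is 0-based): so
  \<open>nth_in lt (output_edges G1) k\<close> is \<open>o_(k+1)\<close>.\<close>
definition nth_in :: "('e \<Rightarrow> 'e \<Rightarrow> bool) \<Rightarrow> 'e set \<Rightarrow> nat \<Rightarrow> 'e" where
  "nth_in lt S k = (THE x. x \<in> S \<and> rank_in lt S x = k)"

text \<open>Edges of the composite: old edges of G1, old edges of G2, and the new
  edges \<open>Glue k\<close> standing for \<open>\<overline>e_(k+1)\<close>.\<close>
datatype ('a, 'b) cedge = Old1 'a | Old2 'b | Glue nat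

definition comp_graph ::
  "('v1,'e1) pre_digraph \<Rightarrow> ('e1 \<Rightarrow> 'e1 \<Rightarrow> bool) \<Rightarrow>
   ('v2,'e2) pre_digraph \<Rightarrow> ('e2 \<Rightarrow> 'e2 \<Rightarrow> bool) \<Rightarrow>
   ('v1 + 'v2, ('e1,'e2) cedge) pre_digraph" where
  "comp_graph G1 less1 G2 less2 =
    (let O1 = output_edges G1; I2 = input_edges G2; n = card O1 in
     \<lparr> verts = Inl ` {v \<in> verts G1. \<not> is_sink G1 v} \<union> Inr ` {v \<in> verts G2. \<not> is_source G2 v},
       arcs = Old1 ` (arcs G1 - O1) \<union> Old2 ` (arcs G2 - I2) \<union> Glue ` {..<n},
       tail = (\<lambda>x. case x of Old1 e \<Rightarrow> Inl (tail G1 e) | Old2 e \<Rightarrow> Inr (tail G2 e)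
                     | Glue k \<Rightarrow> Inl (tail G1 (nth_in less1 O1 k))),
       head = (\<lambda>x. case x of Old1 e \<Rightarrow> Inl (head G1 e) | Old2 e \<Rightarrow> Inr (head G2 e)
                     | Glue k \<Rightarrow> Inr (head G2 (nth_in less2 I2 k))) \<rparr>)"

text \<open>Block index realizing the consecutive listing
  \<open>Q_1, \<overline>e_1, P_1, Q_2, \<overline>e_2, P_2, \<dots>\<close>:
  \<open>Q_(k+1)\<close> gets key 3k, \<open>\<overline>e_(k+1)\<close> gets 3k+1, \<open>P_(k+1)\<close> gets 3k+2.
  An edge e of G1 lies in \<open>Q_(k+1)\<close> where k is the number of output edges below it;
  an edge e of G2 lies in \<open>P_j\<close> where j is the number of input edges below it.\<close>
definition comp_key ::
  "('v1,'e1) pre_digraph \<Rightarrow> ('e1 \<Rightarrow> 'e1 \<Rightarrow> bool) \<Rightarrow>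
   ('v2,'e2) pre_digraph \<Rightarrow> ('e2 \<Rightarrow> 'e2 \<Rightarrow> bool) \<Rightarrow> ('e1,'e2) cedge \<Rightarrow> nat" where
  "comp_key G1 less1 G2 less2 x =
    (case x of Old1 e \<Rightarrow> 3 * rank_in less1 (output_edges G1) e
             | Glue k \<Rightarrow> 3 * k + 1
             | Old2 e \<Rightarrow> 3 * rank_in less2 (input_edges G2) e - 1)"

definition comp_within ::
  "('e1 \<Rightarrow> 'e1 \<Rightarrow> bool) \<Rightarrow> ('e2 \<Rightarrow> 'e2 \<Rightarrow> bool) \<Rightarrow> ('e1,'e2) cedge \<Rightarrow> ('e1,'e2) cedge \<Rightarrow> bool" where
  "comp_within less1 less2 x y =
    (case (x, y) of (Old1 a, Old1 b) \<Rightarrow> less1 a b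
                  | (Old2 a, Old2 b) \<Rightarrow> less2 a b
                  | _ \<Rightarrow> False)"

definition comp_order ::
  "('v1,'e1) pre_digraph \<Rightarrow> ('e1 \<Rightarrow> 'e1 \<Rightarrow> bool) \<Rightarrow>
   ('v2,'e2) pre_digraph \<Rightarrow> ('e2 \<Rightarrow> 'e2 \<Rightarrow> bool) \<Rightarrow>
   ('e1,'e2) cedge \<Rightarrow> ('e1,'e2) cedge \<Rightarrow> bool" where
  "comp_order G1 less1 G2 less2 x y =
    (let kx = comp_key G1 less1 G2 less2 x; ky = comp_key G1 less1 G2 less2 y in
     kx < ky \<or> (kx = ky \<and> comp_within less1 less2 x y))"

end

theory Submission
  imports Defs
begin

text \<open>The edges of \<open>G\<^sub>2 \<circ> G\<^sub>1\<close> fall into a first side (old edges of \<open>G\<^sub>1\<close> and the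
  glued edges \<open>\<overline>e\<^sub>k\<close>, identified with \<open>o\<^sub>k\<close>) and a second side (the glued edges, identified
  with \<open>i\<^sub>k\<close>, and old edges of \<open>G\<^sub>2\<close>). On each side the composite order and the path
  relation are those of the original graph, so (P1) and (P2) transfer side by side. A path
  leaving the first side passes through a glued edge, at which an instance of (P2) splits into
  two one-sided instances. In a one-sided instance the middle edge may lie on the other side;
  it is then replaced by the adjacent glued edge, which has the same position relative to that
  side and is joined to the middle edge by a path: by (P2), every non-output edge of \<open>G\<^sub>1\<close>
  reaches the next output edge above it, and every non-input edge of \<open>G\<^sub>2\<close> is reached from
  the previous input edge below it.\<close>

lemma trancl_embedding_iff:
  assumes succ_iff: "\<And>x y. x \<in> D \<Longrightarrow> y \<in> D \<Longrightarrow> (x, y) \<in> R \<longleftrightarrow> (f x, f y) \<in> S"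
    and pred_closed: "\<And>x y. (x, y) \<in> R \<Longrightarrow> y \<in> D \<Longrightarrow> x \<in> D"
    and tails_covered: "\<And>a b. (a, b) \<in> S \<Longrightarrow> a \<in> f ` D"
    and "x \<in> D" "z \<in> D"
  shows "(x, z) \<in> R\<^sup>+ \<longleftrightarrow> (f x, f z) \<in> S\<^sup>+"
proof
  have "x \<in> D \<and> (f x, f z) \<in> S\<^sup>+" if "(x, z) \<in> R\<^sup>+" "z \<in> D" for z
    using that
  proof (induction rule: trancl_induct)
    case (base y)
    then show ?case using pred_closed succ_iff by blast
  next
    case (step y z)
    then have "y \<in> D" using pred_closed by blast
    with step show ?case using succ_iff by (meson trancl_into_trancl)
  qed
  then show "(x, z) \<in> R\<^sup>+ \<Longrightarrow> (f x, f z) \<in> S\<^sup>+" using \<open>z \<in> D\<close> by blast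
next
  have "(x, z) \<in> R\<^sup>+" if "(f x, c) \<in> S\<^sup>+" "z \<in> D" "f z = c" for c z
    using that
  proof (induction arbitrary: z rule: trancl_induct)
    case (base c)
    then show ?case using succ_iff \<open>x \<in> D\<close> by blast
  next
    case (step b c)
    obtain y where y: "y \<in> D" "f y = b" using tails_covered[OF step.hyps(2)] by blast
    have "(x, y) \<in> R\<^sup>+" using step.IH y by blast
    moreover have "(y, z) \<in> R" using succ_iff[OF y(1) step.prems(1)] step y by simp
    ultimately show ?case by (rule trancl_into_trancl)
  qed
  then show "(f x, f z) \<in> S\<^sup>+ \<Longrightarrow> (x, z) \<in> R\<^sup>+" using \<open>z \<in> D\<close> by blast
qed

section \<open>Ranks in a linear order\<close>

context
  fixes E :: "'e set" and lt :: "'e \<Rightarrow> 'e \<Rightarrow> bool"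
  assumes lin: "linear_order_on_edges E lt"
begin

lemma lin_irrefl: "a \<in> E \<Longrightarrow> \<not> lt a a"
  using lin by (simp add: linear_order_on_edges_def)

lemma lin_trans: "a \<in> E \<Longrightarrow> b \<in> E \<Longrightarrow> c \<in> E \<Longrightarrow> lt a b \<Longrightarrow> lt b c \<Longrightarrow> lt a c"
  using lin unfolding linear_order_on_edges_def by blast

lemma lin_total: "a \<in> E \<Longrightarrow> b \<in> E \<Longrightarrow> a \<noteq> b \<Longrightarrow> lt a b \<or> lt b a"
  using lin unfolding linear_order_on_edges_def by blast

end

context
  fixes E :: "'e set" and lt :: "'e \<Rightarrow> 'e \<Rightarrow> bool" and S :: "'e set"
  assumes lin: "linear_order_on_edges E lt" and S_sub: "S \<subseteq> E" and S_fin: "finite S"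
begin

lemma rank_in_mono:
  assumes "x \<in> E" "y \<in> E" "lt x y"
  shows "rank_in lt S x \<le> rank_in lt S y"
  unfolding rank_in_def
proof (rule card_mono)
  show "{z \<in> S. lt z x} \<subseteq> {z \<in> S. lt z y}" using assms S_sub lin_trans[OF lin] by blast
qed (use S_fin in simp)

lemma rank_in_strict_mono:
  assumes "x \<in> S" "y \<in> E" "lt x y"
  shows "rank_in lt S x < rank_in lt S y"
  unfolding rank_in_def
proof (rule psubset_card_mono)
  show "{z \<in> S. lt z x} \<subset> {z \<in> S. lt z y}"
    using assms S_sub lin_irrefl[OF lin] lin_trans[OF lin] by blast
qed (use S_fin in simp)

lemma less_of_rank_in_less:
  assumes "x \<in> E" "y \<in> E" "rank_in lt S x < rank_in lt S y"
  shows "lt x y"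
proof (rule ccontr)
  assume "\<not> lt x y"
  moreover have "x \<noteq> y" using assms(3) by auto
  ultimately have "lt y x" using assms lin_total[OF lin] by blast
  then show False using rank_in_mono[of y x] assms by simp
qed

lemma rank_in_less_card: "x \<in> S \<Longrightarrow> rank_in lt S x < card S"
  unfolding rank_in_def using S_fin lin_irrefl[OF lin] S_sub by (intro psubset_card_mono) blast+

lemma rank_in_le_card: "rank_in lt S x \<le> card S"
  unfolding rank_in_def using S_fin by (intro card_mono) auto

lemma inj_on_rank_in: "inj_on (rank_in lt S) S"
proof (rule inj_onI)
  fix x y assume "x \<in> S" "y \<in> S" "rank_in lt S x = rank_in lt S y"
  then show "x = y"
    using S_sub lin_total[OF lin, of x y] rank_in_strict_mono[of x y] rank_in_strict_mono[of y x]
    by auto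
qed

lemma nth_in_rank_in:
  assumes "k < card S"
  shows "nth_in lt S k \<in> S" "rank_in lt S (nth_in lt S k) = k"
proof -
  have "rank_in lt S ` S = {..<card S}"
  proof (rule card_subset_eq)
    show "rank_in lt S ` S \<subseteq> {..<card S}" using rank_in_less_card by auto
  qed (simp_all add: card_image[OF inj_on_rank_in])
  then obtain x where "x \<in> S" "rank_in lt S x = k" using assms by (metis imageE lessThan_iff)
  then have "\<exists>!x. x \<in> S \<and> rank_in lt S x = k" using inj_on_rank_in by (blast dest: inj_onD)
  then have "nth_in lt S k \<in> S \<and> rank_in lt S (nth_in lt S k) = k"
    unfolding nth_in_def by (rule theI')
  then show "nth_in lt S k \<in> S" "rank_in lt S (nth_in lt S k) = k" by auto
qed

lemma member_less_iff_rank_in_less: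
  "s \<in> S \<Longrightarrow> x \<in> E \<Longrightarrow> lt s x \<longleftrightarrow> rank_in lt S s < rank_in lt S x"
  using S_sub less_of_rank_in_less rank_in_strict_mono by blast

lemma less_member_iff_rank_in_le:
  assumes "s \<in> S" "x \<in> E" "x \<noteq> s"
  shows "lt x s \<longleftrightarrow> rank_in lt S x \<le> rank_in lt S s"
proof
  show "lt x s \<Longrightarrow> rank_in lt S x \<le> rank_in lt S s"
    using assms S_sub rank_in_mono by blast
  show "rank_in lt S x \<le> rank_in lt S s \<Longrightarrow> lt x s"
    using assms S_sub lin_total[OF lin, of x s] rank_in_strict_mono[of s x] by fastforce
qed

lemma less_iff_rank_in_lex:
  "x \<in> E \<Longrightarrow> y \<in> E \<Longrightarrow>
     lt x y \<longleftrightarrow> rank_in lt S x < rank_in lt S y \<or> rank_in lt S x = rank_in lt S y \<and> lt x y"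
  using less_of_rank_in_less[of x y] rank_in_mono[of x y] by auto

end

section \<open>POP-graphs\<close>

lemma trancl_edge_succ_arcs: "(a, b) \<in> (edge_succ G)\<^sup>+ \<Longrightarrow> a \<in> arcs G \<and> b \<in> arcs G"
proof -
  have "edge_succ G \<subseteq> arcs G \<times> arcs G" by (auto simp: edge_succ_def)
  then have "(edge_succ G)\<^sup>+ \<subseteq> arcs G \<times> arcs G" by (rule trancl_subset_Sigma)
  then show "(a, b) \<in> (edge_succ G)\<^sup>+ \<Longrightarrow> a \<in> arcs G \<and> b \<in> arcs G" by blast
qed

lemma acyclic_edge_succ:
  assumes "acyclic (arcs_ends G)"
  shows "acyclic (edge_succ G)"
proof (rule acyclicI, intro allI notI)
  have ends: "(tail G e, head G e) \<in> arcs_ends G" if "e \<in> arcs G" for e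
    using that by (auto simp: arcs_ends_def arc_to_ends_def)
  have head_tail: "(head G x, tail G y) \<in> (arcs_ends G)\<^sup>*" if "(x, y) \<in> (edge_succ G)\<^sup>+" for x y
    using that
  proof (induction rule: trancl_induct)
    case (step y z)
    have "(tail G y, head G y) \<in> arcs_ends G"
      using ends[of y] step.hyps(2) unfolding edge_succ_def by blast
    moreover have "head G y = tail G z"
      using step.hyps(2) by (simp add: edge_succ_def)
    ultimately show ?case using step.IH by (metis rtrancl.rtrancl_into_rtrancl)
  qed (simp add: edge_succ_def)
  fix e assume "(e, e) \<in> (edge_succ G)\<^sup>+"
  then have "(tail G e, tail G e) \<in> (arcs_ends G)\<^sup>+"
    using ends head_tail trancl_edge_succ_arcs by (meson rtrancl_into_trancl2)
  then show False using assms by (simp add: acyclic_def)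
qed

locale pop_graph =
  fixes G :: "('v, 'e) pre_digraph" and lt :: "'e \<Rightarrow> 'e \<Rightarrow> bool"
  assumes pop: "POP_graph G lt"
begin

sublocale fin_digraph G
  using pop by (simp add: POP_graph_def progressive_def)

lemma linear: "linear_order_on_edges (arcs G) lt"
  using pop by (simp add: POP_graph_def planar_order_def)

lemma finite_output_edges: "finite (output_edges G)"
  by (rule finite_subset[OF _ finite_arcs]) (auto simp: output_edges_def)

lemma finite_input_edges: "finite (input_edges G)"
  by (rule finite_subset[OF _ finite_arcs]) (auto simp: input_edges_def)

lemma output_edges_subset: "output_edges G \<subseteq> arcs G"
  by (auto simp: output_edges_def)

lemma input_edges_subset: "input_edges G \<subseteq> arcs G"
  by (auto simp: input_edges_def)

lemma acyclic_succ: "acyclic (edge_succ G)"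
  using pop by (intro acyclic_edge_succ) (simp add: POP_graph_def progressive_def)

lemma path_less:
  assumes "(a, c) \<in> (edge_succ G)\<^sup>+"
  shows "lt a c"
proof -
  have "a \<noteq> c" using assms acyclic_succ by (auto simp: acyclic_def)
  then show ?thesis using pop assms trancl_edge_succ_arcs[OF assms]
    unfolding POP_graph_def planar_order_def edge_path_def by blast
qed

lemma path_between:
  assumes "a \<in> arcs G" "b \<in> arcs G" "c \<in> arcs G" "lt a b" "lt b c"
    and "(a, c) \<in> (edge_succ G)\<^sup>+"
  shows "(a, b) \<in> (edge_succ G)\<^sup>+ \<or> (b, c) \<in> (edge_succ G)\<^sup>+"
proof -
  have "a \<noteq> c" using assms acyclic_succ by (auto simp: acyclic_def)
  then have "edge_path G a b \<or> edge_path G b c"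
    using pop assms unfolding POP_graph_def planar_order_def edge_path_def by blast
  then show ?thesis by (auto simp: edge_path_def)
qed

lemma out_degree_eq_0_iff: "out_degree G v = 0 \<longleftrightarrow> out_arcs G v = {}"
  by (simp add: out_degree_def finite_out_arcs)

lemma in_degree_eq_0_iff: "in_degree G v = 0 \<longleftrightarrow> in_arcs G v = {}"
  by (simp add: in_degree_def finite_in_arcs)

lemma output_no_succ: "p \<in> output_edges G \<Longrightarrow> (p, e) \<notin> edge_succ G"
proof
  assume p: "p \<in> output_edges G" and "(p, e) \<in> edge_succ G"
  then have "p \<in> in_arcs G (head G p)" "e \<in> out_arcs G (head G p)"
    by (auto simp: output_edges_def edge_succ_def)
  then have "in_degree G (head G p) \<noteq> 0" "out_degree G (head G p) \<noteq> 0"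
    using in_degree_eq_0_iff out_degree_eq_0_iff by blast+
  moreover have "degree G (head G p) = 1"
    using p by (simp add: output_edges_def boundary_def)
  ultimately show False by (simp add: degree_def)
qed

lemma input_no_pred: "i \<in> input_edges G \<Longrightarrow> (e, i) \<notin> edge_succ G"
proof
  assume i: "i \<in> input_edges G" and "(e, i) \<in> edge_succ G"
  then have "i \<in> out_arcs G (tail G i)" "e \<in> in_arcs G (tail G i)"
    by (auto simp: input_edges_def edge_succ_def)
  then have "in_degree G (tail G i) \<noteq> 0" "out_degree G (tail G i) \<noteq> 0"
    using in_degree_eq_0_iff out_degree_eq_0_iff by blast+
  moreover have "degree G (tail G i) = 1"
    using i by (simp add: input_edges_def boundary_def)
  ultimately show False by (simp add: degree_def)
qed

lemma output_no_path: "p \<in> output_edges G \<Longrightarrow> (p, e) \<notin> (edge_succ G)\<^sup>+"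
  using output_no_succ by (blast dest: tranclD)

lemma input_no_path: "i \<in> input_edges G \<Longrightarrow> (e, i) \<notin> (edge_succ G)\<^sup>+"
  using input_no_pred by (blast dest: tranclD2)

lemma reaches_output: "e \<in> arcs G \<Longrightarrow> \<exists>p \<in> output_edges G. (e, p) \<in> (edge_succ G)\<^sup>*"
proof (induction e rule: wf_induct_rule[OF finite_acyclic_wf_converse[OF _ acyclic_succ]])
  show "finite (edge_succ G)"
    by (rule finite_subset[of _ "arcs G \<times> arcs G"]) (auto simp: edge_succ_def)
next
  case (2 e)
  show ?case
  proof (cases "out_arcs G (head G e) = {}")
    case True
    then have "is_sink G (head G e)"
      using \<open>e \<in> arcs G\<close> out_degree_eq_0_iff by (simp add: is_sink_def)
    then have "e \<in> output_edges G"
      using pop \<open>e \<in> arcs G\<close> by (simp add: output_edges_def boundary_def is_sink_def POP_graph_def progressive_def)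
    then show ?thesis by blast
  next
    case False
    then obtain e' where succ: "(e, e') \<in> edge_succ G"
      using \<open>e \<in> arcs G\<close> by (fastforce simp: edge_succ_def out_arcs_def)
    then obtain p where "p \<in> output_edges G" "(e', p) \<in> (edge_succ G)\<^sup>*"
      using "2.IH"[of e'] by (auto simp: edge_succ_def)
    then show ?thesis using succ by (meson converse_rtrancl_into_rtrancl)
  qed
qed

lemma reached_from_input: "e \<in> arcs G \<Longrightarrow> \<exists>i \<in> input_edges G. (i, e) \<in> (edge_succ G)\<^sup>*"
proof (induction e rule: wf_induct_rule[OF finite_acyclic_wf[OF _ acyclic_succ]])
  show "finite (edge_succ G)"
    by (rule finite_subset[of _ "arcs G \<times> arcs G"]) (auto simp: edge_succ_def)
next
  case (2 e)
  show ?case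
  proof (cases "in_arcs G (tail G e) = {}")
    case True
    then have "is_source G (tail G e)"
      using \<open>e \<in> arcs G\<close> in_degree_eq_0_iff by (simp add: is_source_def)
    then have "e \<in> input_edges G"
      using pop \<open>e \<in> arcs G\<close> by (simp add: input_edges_def boundary_def is_source_def POP_graph_def progressive_def)
    then show ?thesis by blast
  next
    case False
    then obtain e' where pred: "(e', e) \<in> edge_succ G"
      using \<open>e \<in> arcs G\<close> by (fastforce simp: edge_succ_def in_arcs_def)
    then obtain i where "i \<in> input_edges G" "(i, e') \<in> (edge_succ G)\<^sup>*"
      using "2.IH"[of e'] by (auto simp: edge_succ_def)
    then show ?thesis using pred by (meson rtrancl_into_rtrancl)
  qed
qed

abbreviation out_rank :: "'e \<Rightarrow> nat" where "out_rank \<equiv> rank_in lt (output_edges G)"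
abbreviation out_nth :: "nat \<Rightarrow> 'e" where "out_nth \<equiv> nth_in lt (output_edges G)"
abbreviation in_rank :: "'e \<Rightarrow> nat" where "in_rank \<equiv> rank_in lt (input_edges G)"
abbreviation in_nth :: "nat \<Rightarrow> 'e" where "in_nth \<equiv> nth_in lt (input_edges G)"

lemma out_nth:
  "k < card (output_edges G) \<Longrightarrow> out_nth k \<in> output_edges G \<and> out_rank (out_nth k) = k"
  using nth_in_rank_in[OF linear output_edges_subset finite_output_edges] by blast

lemma in_nth:
  "k < card (input_edges G) \<Longrightarrow> in_nth k \<in> input_edges G \<and> in_rank (in_nth k) = k"
  using nth_in_rank_in[OF linear input_edges_subset finite_input_edges] by blast

lemma less_out_nth_iff:
  "a \<in> arcs G \<Longrightarrow> a \<notin> output_edges G \<Longrightarrow> k < card (output_edges G) \<Longrightarrow>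
     lt a (out_nth k) \<longleftrightarrow> out_rank a \<le> k"
  using less_member_iff_rank_in_le[OF linear output_edges_subset finite_output_edges] out_nth
  by metis

lemma out_nth_less_iff:
  "x \<in> arcs G \<Longrightarrow> k < card (output_edges G) \<Longrightarrow> lt (out_nth k) x \<longleftrightarrow> k < out_rank x"
  using member_less_iff_rank_in_less[OF linear output_edges_subset finite_output_edges] out_nth
  by metis

lemma out_nth_less_out_nth_iff:
  "j < card (output_edges G) \<Longrightarrow> k < card (output_edges G) \<Longrightarrow> lt (out_nth j) (out_nth k) \<longleftrightarrow> j < k"
proof -
  assume "j < card (output_edges G)" "k < card (output_edges G)"
  then show ?thesis using out_nth_less_iff[of "out_nth k" j] out_nth[of k] output_edges_subset by auto
qed

lemma less_in_nth_iff:
  "d \<in> arcs G \<Longrightarrow> d \<notin> input_edges G \<Longrightarrow> k < card (input_edges G) \<Longrightarrow>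
     lt d (in_nth k) \<longleftrightarrow> in_rank d \<le> k"
  using less_member_iff_rank_in_le[OF linear input_edges_subset finite_input_edges] in_nth
  by metis

lemma in_nth_less_iff:
  "x \<in> arcs G \<Longrightarrow> k < card (input_edges G) \<Longrightarrow> lt (in_nth k) x \<longleftrightarrow> k < in_rank x"
  using member_less_iff_rank_in_less[OF linear input_edges_subset finite_input_edges] in_nth
  by metis

lemma in_nth_less_in_nth_iff:
  "j < card (input_edges G) \<Longrightarrow> k < card (input_edges G) \<Longrightarrow> lt (in_nth j) (in_nth k) \<longleftrightarrow> j < k"
proof -
  assume "j < card (input_edges G)" "k < card (input_edges G)"
  then show ?thesis using in_nth_less_iff[of "in_nth k" j] in_nth[of k] input_edges_subset by auto
qed

lemma reaches_next_output:
  assumes a: "a \<in> arcs G" "a \<notin> output_edges G"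
  shows "out_rank a < card (output_edges G) \<and> (a, out_nth (out_rank a)) \<in> (edge_succ G)\<^sup>+"
proof -
  note ranks = linear output_edges_subset finite_output_edges
  obtain p where p: "p \<in> output_edges G" "(a, p) \<in> (edge_succ G)\<^sup>*"
    using reaches_output[OF a(1)] by blast
  then have ap: "(a, p) \<in> (edge_succ G)\<^sup>+" using a(2) by (metis rtranclD)
  have "out_rank a \<le> out_rank p"
    using rank_in_mono[OF ranks] path_less[OF ap] a p output_edges_subset by blast
  then have lt_card: "out_rank a < card (output_edges G)"
    using rank_in_less_card[OF ranks p(1)] by linarith
  define q where "q = out_nth (out_rank a)"
  have q: "q \<in> output_edges G" "out_rank q = out_rank a"
    using out_nth[OF lt_card] by (simp_all add: q_def)
  have "(a, q) \<in> (edge_succ G)\<^sup>+"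
  proof (cases "q = p")
    case False
    have "lt a q"
      using less_out_nth_iff[OF a lt_card] by (simp add: q_def)
    moreover have "out_rank q \<noteq> out_rank p"
      using q(1) p(1) False inj_on_rank_in[OF ranks] by (metis inj_on_eq_iff)
    then have "lt q p"
      using out_nth_less_iff[OF _ lt_card] \<open>out_rank a \<le> out_rank p\<close> q p output_edges_subset
      by (auto simp: q_def)
    ultimately have "(a, q) \<in> (edge_succ G)\<^sup>+ \<or> (q, p) \<in> (edge_succ G)\<^sup>+"
      using path_between a q p ap output_edges_subset by blast
    then show ?thesis using output_no_path q(1) by blast
  qed (use ap in simp)
  then show ?thesis using lt_card by (simp add: q_def)
qed

lemma reached_from_previous_input:
  assumes d: "d \<in> arcs G" "d \<notin> input_edges G"
  shows "0 < in_rank d \<and> (in_nth (in_rank d - 1), d) \<in> (edge_succ G)\<^sup>+"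
proof -
  note ranks = linear input_edges_subset finite_input_edges
  obtain i where i: "i \<in> input_edges G" "(i, d) \<in> (edge_succ G)\<^sup>*"
    using reached_from_input[OF d(1)] by blast
  then have id: "(i, d) \<in> (edge_succ G)\<^sup>+" using d(2) by (metis rtranclD)
  have "in_rank i < in_rank d"
    using rank_in_strict_mono[OF ranks i(1) d(1) path_less[OF id]] .
  moreover have "in_rank d \<le> card (input_edges G)"
    using rank_in_le_card[OF ranks] .
  ultimately have j_card: "in_rank d - 1 < card (input_edges G)" by linarith
  define q where "q = in_nth (in_rank d - 1)"
  have q: "q \<in> input_edges G" "in_rank q = in_rank d - 1"
    using in_nth[OF j_card] by (simp_all add: q_def)
  have "(q, d) \<in> (edge_succ G)\<^sup>+"
  proof (cases "q = i")
    case False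
    have "in_rank i \<noteq> in_rank q"
      using q(1) i(1) False inj_on_rank_in[OF ranks] by (metis inj_on_eq_iff)
    then have "in_rank i < in_rank q"
      using \<open>in_rank i < in_rank d\<close> q(2) by linarith
    then have "lt i q"
      using member_less_iff_rank_in_less[OF ranks i(1)] q(1) input_edges_subset by blast
    moreover have "lt q d"
      using in_nth_less_iff[OF d(1) j_card] \<open>in_rank i < in_rank d\<close> by (simp add: q_def)
    ultimately have "(i, q) \<in> (edge_succ G)\<^sup>+ \<or> (q, d) \<in> (edge_succ G)\<^sup>+"
      using path_between d i q id input_edges_subset by blast
    then show ?thesis using input_no_path q(1) by blast
  qed (use id in simp)
  then show ?thesis using \<open>in_rank i < in_rank d\<close> by (simp add: q_def)
qed

end

section \<open>Composition\<close>

fun first_side :: "('a, 'b) cedge \<Rightarrow> bool" where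
  "first_side (Old2 _) = False"
| "first_side _ = True"

fun second_side :: "('a, 'b) cedge \<Rightarrow> bool" where
  "second_side (Old1 _) = False"
| "second_side _ = True"

locale pop_composition =
  G1: pop_graph G1 less1 + G2: pop_graph G2 less2
  for G1 :: "('v1, 'e1) pre_digraph" and less1
    and G2 :: "('v2, 'e2) pre_digraph" and less2 +
  assumes card_eq: "card (output_edges G1) = card (input_edges G2)"
begin

abbreviation "n \<equiv> card (output_edges G1)"
abbreviation "CG \<equiv> comp_graph G1 less1 G2 less2"
abbreviation "cless \<equiv> comp_order G1 less1 G2 less2"

text \<open>\<open>Glue k\<close> (that is, \<open>\<overline>e\<^sub>k\<^sub>+\<^sub>1\<close>) lies on both sides: \<open>first_edge\<close> identifies it
  with \<open>o\<^sub>k\<^sub>+\<^sub>1\<close> in \<open>G\<^sub>1\<close>, \<open>second_edge\<close> with \<open>i\<^sub>k\<^sub>+\<^sub>1\<close> in \<open>G\<^sub>2\<close>.\<close>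

primrec first_edge :: "('e1, 'e2) cedge \<Rightarrow> 'e1" where
  "first_edge (Old1 a) = a"
| "first_edge (Glue k) = G1.out_nth k"

primrec second_edge :: "('e1, 'e2) cedge \<Rightarrow> 'e2" where
  "second_edge (Glue k) = G2.in_nth k"
| "second_edge (Old2 b) = b"

lemma comp_arcs_iff:
  "Old1 a \<in> arcs CG \<longleftrightarrow> a \<in> arcs G1 \<and> a \<notin> output_edges G1"
  "Old2 b \<in> arcs CG \<longleftrightarrow> b \<in> arcs G2 \<and> b \<notin> input_edges G2"
  "Glue k \<in> arcs CG \<longleftrightarrow> k < n"
  by (auto simp: comp_graph_def Let_def)

lemma comp_tail_head:
  "tail CG (Old1 a) = Inl (tail G1 a)" "head CG (Old1 a) = Inl (head G1 a)"
  "tail CG (Old2 b) = Inr (tail G2 b)" "head CG (Old2 b) = Inr (head G2 b)"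
  "tail CG (Glue k) = Inl (tail G1 (G1.out_nth k))" "head CG (Glue k) = Inr (head G2 (G2.in_nth k))"
  by (simp_all add: comp_graph_def Let_def)

lemma first_edge_in_arcs: "x \<in> arcs CG \<Longrightarrow> first_side x \<Longrightarrow> first_edge x \<in> arcs G1"
  using G1.out_nth G1.output_edges_subset by (cases x) (auto simp: comp_arcs_iff)

lemma second_edge_in_arcs: "x \<in> arcs CG \<Longrightarrow> second_side x \<Longrightarrow> second_edge x \<in> arcs G2"
  using G2.in_nth G2.input_edges_subset card_eq by (cases x) (auto simp: comp_arcs_iff)

lemma succ_same_side:
  "(x, y) \<in> edge_succ CG \<Longrightarrow> first_side x \<and> first_side y \<or> second_side x \<and> second_side y"
  by (cases x; cases y) (auto simp: edge_succ_def comp_tail_head)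

lemma succ_first_side: "(x, y) \<in> edge_succ CG \<Longrightarrow> first_side y \<Longrightarrow> first_side x"
  by (cases x; cases y) (auto simp: edge_succ_def comp_tail_head)

lemma succ_second_side: "(x, y) \<in> edge_succ CG \<Longrightarrow> second_side x \<Longrightarrow> second_side y"
  by (cases x; cases y) (auto simp: edge_succ_def comp_tail_head)

lemma first_succ_iff:
  assumes "x \<in> arcs CG" "y \<in> arcs CG" "first_side x" "first_side y"
  shows "(x, y) \<in> edge_succ CG \<longleftrightarrow> (first_edge x, first_edge y) \<in> edge_succ G1"
  using assms first_edge_in_arcs[of x] first_edge_in_arcs[of y] G1.out_nth G1.output_no_succ
  by (cases x; cases y) (auto simp: edge_succ_def comp_arcs_iff comp_tail_head)

lemma second_succ_iff:
  assumes "x \<in> arcs CG" "y \<in> arcs CG" "second_side x" "second_side y"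
  shows "(x, y) \<in> edge_succ CG \<longleftrightarrow> (second_edge x, second_edge y) \<in> edge_succ G2"
  using assms second_edge_in_arcs[of x] second_edge_in_arcs[of y] G2.in_nth G2.input_no_pred card_eq
  by (cases x; cases y) (auto simp: edge_succ_def comp_arcs_iff comp_tail_head)

lemma first_path_iff:
  assumes "x \<in> arcs CG" "z \<in> arcs CG" "first_side x" "first_side z"
  shows "(x, z) \<in> (edge_succ CG)\<^sup>+ \<longleftrightarrow> (first_edge x, first_edge z) \<in> (edge_succ G1)\<^sup>+"
proof (rule trancl_embedding_iff[where D = "{x \<in> arcs CG. first_side x}"])
  show "a \<in> first_edge ` {x \<in> arcs CG. first_side x}" if "(a, b) \<in> edge_succ G1" for a b
  proof
    show "Old1 a \<in> {x \<in> arcs CG. first_side x}"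
      using that G1.output_no_succ by (auto simp: comp_arcs_iff edge_succ_def)
  qed simp
  show "x \<in> {x \<in> arcs CG. first_side x}" if "(x, y) \<in> edge_succ CG" "y \<in> {x \<in> arcs CG. first_side x}"
    for x y
    using that succ_first_side by (auto simp: edge_succ_def)
qed (use assms first_succ_iff in simp_all)

lemma second_path_iff:
  assumes "x \<in> arcs CG" "z \<in> arcs CG" "second_side x" "second_side z"
  shows "(x, z) \<in> (edge_succ CG)\<^sup>+ \<longleftrightarrow> (second_edge x, second_edge z) \<in> (edge_succ G2)\<^sup>+"
proof -
  have "(z, x) \<in> ((edge_succ CG)\<inverse>)\<^sup>+ \<longleftrightarrow> (second_edge z, second_edge x) \<in> ((edge_succ G2)\<inverse>)\<^sup>+"
  proof (rule trancl_embedding_iff[where D = "{x \<in> arcs CG. second_side x}"])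
    show "a \<in> second_edge ` {x \<in> arcs CG. second_side x}" if "(a, b) \<in> (edge_succ G2)\<inverse>" for a b
    proof
      show "Old2 a \<in> {x \<in> arcs CG. second_side x}"
        using that G2.input_no_pred by (auto simp: comp_arcs_iff edge_succ_def)
    qed simp
    show "x \<in> {x \<in> arcs CG. second_side x}"
      if "(x, y) \<in> (edge_succ CG)\<inverse>" "y \<in> {x \<in> arcs CG. second_side x}" for x y
      using that succ_second_side by (auto simp: edge_succ_def)
  qed (use assms second_succ_iff in simp_all)
  then show ?thesis by (simp add: trancl_converse)
qed

lemma path_first_side: "(x, z) \<in> (edge_succ CG)\<^sup>+ \<Longrightarrow> first_side z \<Longrightarrow> first_side x"
  by (induction rule: trancl_induct) (auto dest: succ_first_side)

lemma path_second_side: "(x, z) \<in> (edge_succ CG)\<^sup>+ \<Longrightarrow> second_side x \<Longrightarrow> second_side z"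
  by (induction rule: trancl_induct) (auto dest: succ_second_side)

lemma path_crosses_glue:
  assumes "(x, z) \<in> (edge_succ CG)\<^sup>+" "\<not> second_side x" "\<not> first_side z"
  shows "\<exists>k. (x, Glue k) \<in> (edge_succ CG)\<^sup>+ \<and> (Glue k, z) \<in> (edge_succ CG)\<^sup>+"
  using assms
proof (induction rule: trancl_induct)
  case (base z)
  then show ?case using succ_same_side by blast
next
  case (step y z)
  show ?case
  proof (cases "first_side y")
    case True
    then have "second_side y" using succ_same_side[OF step.hyps(2)] step.prems by blast
    then obtain k where "y = Glue k" using True by (cases y) auto
    then show ?thesis using step.hyps by blast
  next
    case False
    then show ?thesis using step by (meson trancl_into_trancl)
  qed
qed

lemma in_rank_pos: "Old2 d \<in> arcs CG \<Longrightarrow> 0 < G2.in_rank d"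
  using G2.reached_from_previous_input by (simp add: comp_arcs_iff)

text \<open>\<open>comp_key\<close> gives an old edge of \<open>G\<^sub>2\<close> the key \<open>3 * rank - 1\<close> with truncated
  subtraction, so these equations need a positive rank; \<open>in_rank_pos\<close> provides it for every
  edge of the composite.\<close>

lemma cless_simps:
  "cless (Old1 a) (Old1 b) \<longleftrightarrow> G1.out_rank a < G1.out_rank b \<or> G1.out_rank a = G1.out_rank b \<and> less1 a b"
  "cless (Old1 a) (Glue k) \<longleftrightarrow> G1.out_rank a \<le> k"
  "cless (Glue k) (Old1 a) \<longleftrightarrow> k < G1.out_rank a"
  "cless (Glue j) (Glue k) \<longleftrightarrow> j < k"
  "0 < G2.in_rank d \<Longrightarrow> cless (Old1 a) (Old2 d) \<longleftrightarrow> G1.out_rank a < G2.in_rank d"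
  "0 < G2.in_rank d \<Longrightarrow> cless (Old2 d) (Old1 a) \<longleftrightarrow> G2.in_rank d \<le> G1.out_rank a"
  "0 < G2.in_rank d \<Longrightarrow> cless (Glue k) (Old2 d) \<longleftrightarrow> k < G2.in_rank d"
  "0 < G2.in_rank d \<Longrightarrow> cless (Old2 d) (Glue k) \<longleftrightarrow> G2.in_rank d \<le> k"
  "0 < G2.in_rank c \<Longrightarrow> 0 < G2.in_rank d \<Longrightarrow>
     cless (Old2 c) (Old2 d) \<longleftrightarrow> G2.in_rank c < G2.in_rank d \<or> G2.in_rank c = G2.in_rank d \<and> less2 c d"
  by (auto simp: comp_order_def comp_key_def comp_within_def Let_def)

lemma cless_irrefl: "x \<in> arcs CG \<Longrightarrow> \<not> cless x x"
  using lin_irrefl[OF G1.linear] lin_irrefl[OF G2.linear] in_rank_pos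
  by (cases x) (auto simp: cless_simps comp_arcs_iff)

lemma cless_trans:
  assumes "x \<in> arcs CG" "y \<in> arcs CG" "z \<in> arcs CG" "cless x y" "cless y z"
  shows "cless x z"
proof -
  have "comp_within less1 less2 x z"
    if "comp_within less1 less2 x y" "comp_within less1 less2 y z"
  proof -
    from that consider
        (first) a b c where "x = Old1 a" "y = Old1 b" "z = Old1 c" "less1 a b" "less1 b c"
      | (second) a b c where "x = Old2 a" "y = Old2 b" "z = Old2 c" "less2 a b" "less2 b c"
      by (cases x; cases y; cases z) (auto simp: comp_within_def)
    then show ?thesis
    proof cases
      case (first a b c)
      then show ?thesis using assms lin_trans[OF G1.linear, of a b c]
        by (simp add: comp_within_def comp_arcs_iff)
    next
      case (second a b c)
      then show ?thesis using assms lin_trans[OF G2.linear, of a b c]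
        by (simp add: comp_within_def comp_arcs_iff)
    qed
  qed
  then show ?thesis using assms(4,5) by (auto simp: comp_order_def Let_def)
qed

lemma cless_total:
  assumes "x \<in> arcs CG" "y \<in> arcs CG" "x \<noteq> y"
  shows "cless x y \<or> cless y x"
  using assms lin_total[OF G1.linear] lin_total[OF G2.linear] in_rank_pos
  by (cases x; cases y) (auto simp: cless_simps comp_arcs_iff)

lemma first_order_iff:
  assumes "x \<in> arcs CG" "y \<in> arcs CG" "first_side x" "first_side y"
  shows "cless x y \<longleftrightarrow> less1 (first_edge x) (first_edge y)"
  using assms G1.less_out_nth_iff G1.out_nth_less_iff G1.out_nth_less_out_nth_iff
    less_iff_rank_in_lex[OF G1.linear G1.output_edges_subset G1.finite_output_edges]
  by (cases x; cases y) (auto simp: cless_simps comp_arcs_iff)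

lemma second_order_iff:
  assumes "x \<in> arcs CG" "y \<in> arcs CG" "second_side x" "second_side y"
  shows "cless x y \<longleftrightarrow> less2 (second_edge x) (second_edge y)"
  using assms G2.less_in_nth_iff G2.in_nth_less_iff G2.in_nth_less_in_nth_iff card_eq in_rank_pos
    less_iff_rank_in_lex[OF G2.linear G2.input_edges_subset G2.finite_input_edges]
  by (cases x; cases y) (auto simp: cless_simps comp_arcs_iff)

lemma glue_no_path_to_first_side: "(Glue k, z) \<in> (edge_succ CG)\<^sup>+ \<Longrightarrow> \<not> first_side z"
proof
  assume path: "(Glue k, z) \<in> (edge_succ CG)\<^sup>+" and "first_side z"
  then have "(G1.out_nth k, first_edge z) \<in> (edge_succ G1)\<^sup>+"
    using first_path_iff trancl_edge_succ_arcs[OF path] by fastforce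
  moreover have "G1.out_nth k \<in> output_edges G1"
    using G1.out_nth trancl_edge_succ_arcs[OF path] by (simp add: comp_arcs_iff)
  ultimately show False using G1.output_no_path by blast
qed

lemma second_side_no_path_to_glue: "(x, Glue k) \<in> (edge_succ CG)\<^sup>+ \<Longrightarrow> \<not> second_side x"
proof
  assume path: "(x, Glue k) \<in> (edge_succ CG)\<^sup>+" and "second_side x"
  then have "(second_edge x, G2.in_nth k) \<in> (edge_succ G2)\<^sup>+"
    using second_path_iff trancl_edge_succ_arcs[OF path] by fastforce
  moreover have "G2.in_nth k \<in> input_edges G2"
    using G2.in_nth card_eq trancl_edge_succ_arcs[OF path] by (simp add: comp_arcs_iff)
  ultimately show False using G2.input_no_path by blast
qed

lemma first_side_path_cless:
  assumes path: "(x, z) \<in> (edge_succ CG)\<^sup>+" and "first_side z"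
  shows "cless x z"
proof -
  have sides: "first_side x" "first_side z" using path_first_side[OF path] assms by auto
  then have "(first_edge x, first_edge z) \<in> (edge_succ G1)\<^sup>+"
    using first_path_iff path trancl_edge_succ_arcs[OF path] by blast
  then show ?thesis using G1.path_less first_order_iff sides trancl_edge_succ_arcs[OF path] by blast
qed

lemma second_side_path_cless:
  assumes path: "(x, z) \<in> (edge_succ CG)\<^sup>+" and "second_side x"
  shows "cless x z"
proof -
  have sides: "second_side x" "second_side z" using path_second_side[OF path] assms by auto
  then have "(second_edge x, second_edge z) \<in> (edge_succ G2)\<^sup>+"
    using second_path_iff path trancl_edge_succ_arcs[OF path] by blast
  then show ?thesis using G2.path_less second_order_iff sides trancl_edge_succ_arcs[OF path] by blast
qed

lemma path_cless:
  assumes path: "(x, z) \<in> (edge_succ CG)\<^sup>+"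
  shows "cless x z"
proof (cases "first_side z \<or> second_side x")
  case True
  then show ?thesis using first_side_path_cless second_side_path_cless path by blast
next
  case False
  then obtain k where xg: "(x, Glue k) \<in> (edge_succ CG)\<^sup>+" and gz: "(Glue k, z) \<in> (edge_succ CG)\<^sup>+"
    using path_crosses_glue path by blast
  have "cless x (Glue k)" "cless (Glue k) z"
    using first_side_path_cless[OF xg] second_side_path_cless[OF gz] by simp_all
  moreover have "x \<in> arcs CG" "Glue k \<in> arcs CG" "z \<in> arcs CG"
    using trancl_edge_succ_arcs[OF xg] trancl_edge_succ_arcs[OF gz] by auto
  ultimately show ?thesis using cless_trans by blast
qed

lemma first_side_between:
  assumes arcs: "x \<in> arcs CG" "y \<in> arcs CG" "z \<in> arcs CG"
    and sides: "first_side x" "first_side z"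
    and less: "cless x y" "cless y z" and path: "(x, z) \<in> (edge_succ CG)\<^sup>+"
  shows "(x, y) \<in> (edge_succ CG)\<^sup>+ \<or> (y, z) \<in> (edge_succ CG)\<^sup>+"
proof -
  have on_side: "(x, w) \<in> (edge_succ CG)\<^sup>+ \<or> (w, z) \<in> (edge_succ CG)\<^sup>+"
    if "w \<in> arcs CG" "first_side w" "cless x w" "cless w z" for w
    using G1.path_between[of "first_edge x" "first_edge w" "first_edge z"]
      first_edge_in_arcs first_order_iff first_path_iff arcs sides path that by blast
  show ?thesis
  proof (cases y)
    case (Old2 b)
    define g :: "('e1, 'e2) cedge" where "g = Glue (G2.in_rank b - 1)"
    have b: "0 < G2.in_rank b" "(G2.in_nth (G2.in_rank b - 1), b) \<in> (edge_succ G2)\<^sup>+"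
      using G2.reached_from_previous_input arcs(2) Old2 by (simp_all add: comp_arcs_iff)
    have "G2.in_rank b \<le> n"
      using rank_in_le_card[OF G2.linear G2.input_edges_subset G2.finite_input_edges] card_eq by simp
    then have g: "g \<in> arcs CG" using b(1) by (simp add: g_def comp_arcs_iff)
    have "(g, y) \<in> (edge_succ CG)\<^sup>+"
      using second_path_iff[OF g arcs(2)] b(2) Old2 by (simp add: g_def)
    moreover have "cless g z"
      using less(2) sides(2) b(1) Old2 by (cases z) (auto simp: g_def cless_simps)
    moreover have "cless x g \<or> x = g"
      using less(1) sides(1) b(1) Old2 by (cases x) (auto simp: g_def cless_simps)
    ultimately show ?thesis
      using on_side[OF g] glue_no_path_to_first_side sides(2) by (auto simp: g_def intro: trancl_trans)
  qed (use on_side arcs less in auto)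
qed

lemma second_side_between:
  assumes arcs: "x \<in> arcs CG" "y \<in> arcs CG" "z \<in> arcs CG"
    and sides: "second_side x" "second_side z"
    and less: "cless x y" "cless y z" and path: "(x, z) \<in> (edge_succ CG)\<^sup>+"
  shows "(x, y) \<in> (edge_succ CG)\<^sup>+ \<or> (y, z) \<in> (edge_succ CG)\<^sup>+"
proof -
  have on_side: "(x, w) \<in> (edge_succ CG)\<^sup>+ \<or> (w, z) \<in> (edge_succ CG)\<^sup>+"
    if "w \<in> arcs CG" "second_side w" "cless x w" "cless w z" for w
    using G2.path_between[of "second_edge x" "second_edge w" "second_edge z"]
      second_edge_in_arcs second_order_iff second_path_iff arcs sides path that by blast
  show ?thesis
  proof (cases y)
    case (Old1 b)
    define g :: "('e1, 'e2) cedge" where "g = Glue (G1.out_rank b)"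
    have b: "G1.out_rank b < n" "(b, G1.out_nth (G1.out_rank b)) \<in> (edge_succ G1)\<^sup>+"
      using G1.reaches_next_output arcs(2) Old1 by (simp_all add: comp_arcs_iff)
    then have g: "g \<in> arcs CG" by (simp add: g_def comp_arcs_iff)
    have "(y, g) \<in> (edge_succ CG)\<^sup>+"
      using first_path_iff[OF arcs(2) g] b(2) Old1 by (simp add: g_def)
    moreover have "cless x g"
      using less(1) sides(1) in_rank_pos arcs(1) Old1 by (cases x) (auto simp: g_def cless_simps)
    moreover have "cless g z \<or> g = z"
      using less(2) sides(2) in_rank_pos arcs(3) Old1 by (cases z) (auto simp: g_def cless_simps)
    ultimately show ?thesis
      using on_side[OF g] second_side_no_path_to_glue sides(1) by (auto simp: g_def intro: trancl_trans)
  qed (use on_side arcs less in auto)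
qed

lemma path_between:
  assumes arcs: "x \<in> arcs CG" "y \<in> arcs CG" "z \<in> arcs CG"
    and less: "cless x y" "cless y z" and path: "(x, z) \<in> (edge_succ CG)\<^sup>+"
  shows "(x, y) \<in> (edge_succ CG)\<^sup>+ \<or> (y, z) \<in> (edge_succ CG)\<^sup>+"
proof -
  consider "first_side z" | "second_side x"
    | k where "(x, Glue k) \<in> (edge_succ CG)\<^sup>+" "(Glue k, z) \<in> (edge_succ CG)\<^sup>+"
    using path_crosses_glue path by blast
  then show ?thesis
  proof cases
    case 1
    then show ?thesis using first_side_between path_first_side assms by blast
  next
    case 2
    then show ?thesis using second_side_between path_second_side assms by blast
  next
    case (3 k)
    have g: "Glue k \<in> arcs CG" using trancl_edge_succ_arcs[OF 3(1)] by blast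
    consider "y = Glue k" | "cless y (Glue k)" | "cless (Glue k) y"
      using cless_total[OF arcs(2) g] by blast
    then show ?thesis
    proof cases
      case 2
      then have "(x, y) \<in> (edge_succ CG)\<^sup>+ \<or> (y, Glue k) \<in> (edge_succ CG)\<^sup>+"
        using first_side_between[OF arcs(1,2) g _ _ less(1) _ 3(1)] path_first_side[OF 3(1)] by simp
      then show ?thesis using 3 by (meson trancl_trans)
    next
      case 3
      then have "(Glue k, y) \<in> (edge_succ CG)\<^sup>+ \<or> (y, z) \<in> (edge_succ CG)\<^sup>+"
        using second_side_between[OF g arcs(2,3) _ _ _ less(2) \<open>(Glue k, z) \<in> _\<close>]
          path_second_side[OF \<open>(Glue k, z) \<in> _\<close>] by simp
      then show ?thesis using \<open>(x, Glue k) \<in> _\<close> by (meson trancl_trans)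
    qed (use 3 in simp)
  qed
qed

lemma planar_order_comp: "planar_order CG cless"
  unfolding planar_order_def linear_order_on_edges_def edge_path_def
  using cless_irrefl cless_trans cless_total path_cless path_between by blast

end

theorem theorem2p2:
  fixes G1 :: "('v1,'e1) pre_digraph" and less1 :: "'e1 \<Rightarrow> 'e1 \<Rightarrow> bool"
    and G2 :: "('v2,'e2) pre_digraph" and less2 :: "'e2 \<Rightarrow> 'e2 \<Rightarrow> bool"
  assumes "POP_graph G1 less1" and "POP_graph G2 less2"
    and "card (output_edges G1) = card (input_edges G2)"
  shows "planar_order (comp_graph G1 less1 G2 less2) (comp_order G1 less1 G2 less2)"
proof -
  interpret pop_composition G1 less1 G2 less2
    using assms by (simp add: pop_composition_def pop_composition_axioms_def pop_graph_def)
  show ?thesis by (rule planar_order_comp)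
qed

end
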